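(* Let $\mathscr{H}$ be a complex Hilbert space, $N(\cdot)$ a norm on $\mathbb{B}(\mathscr{H})$, and $B,C\in\mathbb{B}(\mathscr{H})$ self-adjoint. Then $$\max\{N(B),N(C)\}\leq w_{(N,e)}(B,C)\leq\sqrt{N^2(B)+N^2(C)}.$$
   Context: For $T\in\mathbb{B}(\mathscr{H})$, $\Re(T)=\frac12(T+T^* )$. For $B,C\in\mathbb{B}(\mathscr{H})$, $w_{(N,e)}(B,C)=\sup_{\lambda_1,\lambda_2\in\mathbb{C},\ |\lambda_1|^2+|\lambda_2|^2\leq 1}\sup_{\theta\in\mathbb{R}} N(\Re(e^{i\theta}(\lambda_1B+\lambda_2C)))$. *)

theory Defs
  imports "HOL-Analysis.Analysis"
begin

text \<open>HOL-Analysis has no complex inner product spaces, so we introduce the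
notion of a complex Hilbert space as a type class: a complex vector space with
a complex inner product (linear in the second argument) that is complete for
the induced norm.\<close>

class chilbert = ab_group_add +
  fixes scaleC :: "complex \<Rightarrow> 'a \<Rightarrow> 'a"
    and cinner :: "'a \<Rightarrow> 'a \<Rightarrow> complex"
  assumes scaleC_add_right: "scaleC a (x + y) = scaleC a x + scaleC a y"
    and scaleC_add_left: "scaleC (a + b) x = scaleC a x + scaleC b x"
    and scaleC_scaleC: "scaleC a (scaleC b x) = scaleC (a * b) x"
    and scaleC_one: "scaleC 1 x = x"
    and cinner_add_right: "cinner x (y + z) = cinner x y + cinner x z"
    and cinner_scaleC_right: "cinner x (scaleC c y) = c * cinner x y"
    and cinner_commute: "cinner y x = cnj (cinner x y)"
    and cinner_nonneg: "0 \<le> Re (cinner x x) \<and> Im (cinner x x) = 0"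
    and cinner_eq_zero: "cinner x x = 0 \<Longrightarrow> x = 0"
    and complete: "\<And>X :: nat \<Rightarrow> 'a.
        (\<forall>e>0. \<exists>M. \<forall>m\<ge>M. \<forall>n\<ge>M. sqrt (Re (cinner (X m - X n) (X m - X n))) < e)
        \<Longrightarrow> (\<exists>L. (\<lambda>n. sqrt (Re (cinner (X n - L) (X n - L)))) \<longlonglongrightarrow> 0)"

definition hnorm :: "'a::chilbert \<Rightarrow> real" where
  "hnorm x = sqrt (Re (cinner x x))"

definition BH :: "('a::chilbert \<Rightarrow> 'a) set" where
  "BH = {T. (\<forall>x y. T (x + y) = T x + T y) \<and> (\<forall>c x. T (scaleC c x) = scaleC c (T x))
            \<and> (\<exists>K. \<forall>x. hnorm (T x) \<le> K * hnorm x)}"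

definition op_add :: "('a::chilbert \<Rightarrow> 'a) \<Rightarrow> ('a \<Rightarrow> 'a) \<Rightarrow> ('a \<Rightarrow> 'a)" where
  "op_add S T = (\<lambda>x. S x + T x)"

definition op_scale :: "complex \<Rightarrow> ('a::chilbert \<Rightarrow> 'a) \<Rightarrow> ('a \<Rightarrow> 'a)" where
  "op_scale c T = (\<lambda>x. scaleC c (T x))"

definition adjoint :: "('a::chilbert \<Rightarrow> 'a) \<Rightarrow> ('a \<Rightarrow> 'a)" where
  "adjoint T = (THE S. \<forall>x y. cinner (T x) y = cinner x (S y))"

definition selfadjoint :: "('a::chilbert \<Rightarrow> 'a) \<Rightarrow> bool" where
  "selfadjoint T \<longleftrightarrow> T \<in> BH \<and> adjoint T = T"

definition ReOp :: "('a::chilbert \<Rightarrow> 'a) \<Rightarrow> ('a \<Rightarrow> 'a)" where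
  "ReOp T = op_scale (1/2) (op_add T (adjoint T))"

definition is_norm_on_BH :: "(('a::chilbert \<Rightarrow> 'a) \<Rightarrow> real) \<Rightarrow> bool" where
  "is_norm_on_BH N \<longleftrightarrow>
     (\<forall>T\<in>BH. 0 \<le> N T) \<and> (\<forall>T\<in>BH. N T = 0 \<longleftrightarrow> T = (\<lambda>x. 0)) \<and>
     (\<forall>T\<in>BH. \<forall>c. N (op_scale c T) = cmod c * N T) \<and>
     (\<forall>S\<in>BH. \<forall>T\<in>BH. N (op_add S T) \<le> N S + N T)"

definition w_Ne :: "(('a::chilbert \<Rightarrow> 'a) \<Rightarrow> real) \<Rightarrow> ('a \<Rightarrow> 'a) \<Rightarrow> ('a \<Rightarrow> 'a) \<Rightarrow> real" where
  "w_Ne N B C = Sup {N (ReOp (op_scale (exp (\<i> * complex_of_real \<theta>))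
                         (op_add (op_scale l1 B) (op_scale l2 C))))
                     | l1 l2 \<theta>. (cmod l1)\<^sup>2 + (cmod l2)\<^sup>2 \<le> 1}"

end

theory Submission
  imports Defs
begin

(* Every bounded operator has an adjoint (by the Riesz representation theorem, which follows from
   completeness via a vector of minimal norm), so for self-adjoint B and C the real part of
   e^(i theta) (l1 B + l2 C) is a B + b C with a = Re (e^(i theta) l1), b = Re (e^(i theta) l2) and
   a^2 + b^2 <= 1.  The triangle inequality for N and Cauchy-Schwarz in R^2 then bound N (a B + b C)
   by sqrt (N(B)^2 + N(C)^2), while (l1, l2, theta) = (1, 0, 0) and (0, 1, 0) give N(B) and N(C). *)

interpretation scaleC: module "scaleC :: complex \<Rightarrow> 'a \<Rightarrow> 'a::chilbert"
  by unfold_locales (fact scaleC_add_right scaleC_add_left scaleC_scaleC scaleC_one)+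

lemma additive_cinner_right: "Modules.additive (cinner x)"
  by unfold_locales (rule cinner_add_right)

lemmas cinner_zero_right [simp] = additive.zero [OF additive_cinner_right]
  and cinner_diff_right = additive.diff [OF additive_cinner_right]

lemma cinner_add_left: "cinner (x + y) z = cinner x z + cinner y z"
  by (metis cinner_commute cinner_add_right complex_cnj_add)

lemma cinner_diff_left: "cinner (x - y) z = cinner x z - cinner y z"
  by (metis cinner_commute cinner_diff_right complex_cnj_diff)

lemma cinner_zero_left [simp]: "cinner 0 x = 0"
  by (metis cinner_commute cinner_zero_right complex_cnj_zero)

lemma cinner_scaleC_left: "cinner (scaleC c x) y = cnj c * cinner x y"
  by (metis cinner_commute cinner_scaleC_right complex_cnj_mult)

lemma Re_cinner_commute: "Re (cinner y x) = Re (cinner x y)"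
  by (subst cinner_commute) simp

lemma hnorm_nonneg [simp]: "0 \<le> hnorm x"
  using cinner_nonneg[of x] by (simp add: hnorm_def)

lemma power2_hnorm: "(hnorm x)\<^sup>2 = Re (cinner x x)"
  using cinner_nonneg[of x] by (simp add: hnorm_def)

lemma cinner_self_eq: "cinner x x = of_real ((hnorm x)\<^sup>2)"
  using cinner_nonneg[of x] by (simp add: power2_hnorm complex_eq_iff)

lemma hnorm_eq_0 [simp]: "hnorm x = 0 \<longleftrightarrow> x = 0"
proof
  assume "hnorm x = 0"
  then have "cinner x x = 0"
    by (simp add: cinner_self_eq)
  then show "x = 0"
    by (rule cinner_eq_zero)
qed (simp add: hnorm_def)

lemma hnorm_scaleC: "hnorm (scaleC c x) = cmod c * hnorm x"
proof -
  have "of_real ((hnorm (scaleC c x))\<^sup>2) = cnj c * c * of_real ((hnorm x)\<^sup>2)"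
    by (simp only: cinner_self_eq[symmetric] cinner_scaleC_left cinner_scaleC_right
        mult.assoc mult.left_commute)
  also have "cnj c * c = of_real ((cmod c)\<^sup>2)"
    by (metis complex_norm_square mult.commute)
  finally have "of_real ((hnorm (scaleC c x))\<^sup>2) = (of_real ((cmod c * hnorm x)\<^sup>2) :: complex)"
    by (simp only: of_real_mult power_mult_distrib)
  then have "(hnorm (scaleC c x))\<^sup>2 = (cmod c * hnorm x)\<^sup>2"
    by (simp only: of_real_eq_iff)
  then show ?thesis
    by simp
qed

lemma power2_hnorm_add: "(hnorm (x + y))\<^sup>2 = (hnorm x)\<^sup>2 + (hnorm y)\<^sup>2 + 2 * Re (cinner x y)"
  using Re_cinner_commute[of x y] by (simp add: power2_hnorm cinner_add_left cinner_add_right)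

lemma power2_hnorm_diff: "(hnorm (x - y))\<^sup>2 = (hnorm x)\<^sup>2 + (hnorm y)\<^sup>2 - 2 * Re (cinner x y)"
  using Re_cinner_commute[of x y]
  by (simp add: power2_hnorm cinner_diff_left cinner_diff_right)

lemma Re_cinner_le_hnorm: "Re (cinner x y) \<le> hnorm x * hnorm y"
proof (cases "y = 0")
  case False
  define r where "r = Re (cinner x y)"
  define t where "t = r / (hnorm y)\<^sup>2"
  have y: "(hnorm y)\<^sup>2 > 0"
    using False by simp
  have "0 \<le> (hnorm (x - scaleC (of_real t) y))\<^sup>2"
    by simp
  also have "\<dots> = (hnorm x)\<^sup>2 + t\<^sup>2 * (hnorm y)\<^sup>2 - 2 * t * r"
    by (simp add: power2_hnorm_diff hnorm_scaleC cinner_scaleC_right power_mult_distrib r_def)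
  also have "\<dots> = (hnorm x)\<^sup>2 - r\<^sup>2 / (hnorm y)\<^sup>2"
    using y by (simp add: t_def field_simps power2_eq_square)
  finally have "r\<^sup>2 \<le> (hnorm x * hnorm y)\<^sup>2"
    using y by (simp add: field_simps)
  then show ?thesis
    unfolding r_def by (rule power2_le_imp_le) simp
qed simp

lemma norm_cinner_le_hnorm: "cmod (cinner x y) \<le> hnorm x * hnorm y"
proof (cases "cinner x y = 0")
  case False
  define w where "w = cinner x y"
  have "(cmod w)\<^sup>2 = Re (cinner x (scaleC (cnj w) y))"
    by (metis Re_complex_of_real cinner_scaleC_right complex_norm_square mult.commute w_def)
  also have "\<dots> \<le> cmod w * (hnorm x * hnorm y)"
    using Re_cinner_le_hnorm[of x "scaleC (cnj w) y"] by (simp add: hnorm_scaleC mult_ac)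
  finally show ?thesis
    using False by (simp add: w_def power2_eq_square)
qed simp

lemma hnorm_triangle: "hnorm (x + y) \<le> hnorm x + hnorm y"
proof (rule power2_le_imp_le)
  show "(hnorm (x + y))\<^sup>2 \<le> (hnorm x + hnorm y)\<^sup>2"
    using Re_cinner_le_hnorm[of x y] by (simp add: power2_hnorm_add power2_sum)
qed simp

lemma hnorm_minus_commute: "hnorm (x - y) = hnorm (y - x)"
  using hnorm_scaleC[of "-1" "y - x"] by simp

lemma hnorm_parallelogram:
  "(hnorm (x + y))\<^sup>2 + (hnorm (x - y))\<^sup>2 = 2 * (hnorm x)\<^sup>2 + 2 * (hnorm y)\<^sup>2"
  by (simp add: power2_hnorm_add power2_hnorm_diff)

lemma hnorm_convergent_if_Cauchy_bound:
  fixes X :: "nat \<Rightarrow> 'a::chilbert"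
  assumes c: "c \<longlonglongrightarrow> 0" and bound: "\<And>m n. (hnorm (X m - X n))\<^sup>2 \<le> c m + c n"
  shows "\<exists>L. (\<lambda>n. hnorm (X n - L)) \<longlonglongrightarrow> 0"
proof (rule complete [folded hnorm_def], intro allI impI)
  fix e :: real
  assume "e > 0"
  then obtain M where M: "\<And>n. n \<ge> M \<Longrightarrow> \<bar>c n\<bar> < e\<^sup>2 / 2"
    using LIMSEQ_D[OF c, of "e\<^sup>2 / 2"] by auto
  have "hnorm (X m - X n) < e" if "m \<ge> M" "n \<ge> M" for m n
  proof (rule power_less_imp_less_base)
    show "(hnorm (X m - X n))\<^sup>2 < e\<^sup>2"
      using bound[of m n] M[OF that(1)] M[OF that(2)] by linarith
  qed (use \<open>e > 0\<close> in simp)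
  then show "\<exists>M. \<forall>m\<ge>M. \<forall>n\<ge>M. hnorm (X m - X n) < e"
    by blast
qed

lemma power2_hnorm_diff_le_midpoint:
  assumes "0 \<le> d" and "d \<le> hnorm (scaleC (1/2) (x + y))"
  shows "(hnorm (x - y))\<^sup>2 \<le> 2 * (hnorm x)\<^sup>2 + 2 * (hnorm y)\<^sup>2 - 4 * d\<^sup>2"
proof -
  have "(2 * d)\<^sup>2 \<le> (hnorm (x + y))\<^sup>2"
    using assms by (intro power_mono) (simp_all add: hnorm_scaleC)
  then show ?thesis
    using hnorm_parallelogram[of x y] by (simp add: power_mult_distrib)
qed

lemma hnorm_minimizer_exists:
  fixes S :: "'a::chilbert set"
  assumes "S \<noteq> {}"
    and midpoint: "\<And>x y. x \<in> S \<Longrightarrow> y \<in> S \<Longrightarrow> scaleC (1/2) (x + y) \<in> S"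
    and closed: "\<And>X L. (\<And>n. X n \<in> S) \<Longrightarrow> (\<lambda>n. hnorm (X n - L)) \<longlonglongrightarrow> 0 \<Longrightarrow> L \<in> S"
  shows "\<exists>L\<in>S. \<forall>x\<in>S. hnorm L \<le> hnorm x"
proof -
  define d where "d = Inf (hnorm ` S)"
  have d_le: "d \<le> hnorm x" if "x \<in> S" for x
    unfolding d_def using that by (intro cInf_lower) (auto intro: bdd_belowI[of _ 0])
  have "0 \<le> d"
    unfolding d_def using \<open>S \<noteq> {}\<close> by (auto intro: cInf_greatest)
  define \<epsilon> where "\<epsilon> n = inverse (real (Suc n))" for n
  have "\<exists>x\<in>S. hnorm x < d + \<epsilon> n" for n
    using cInf_lessD[of "hnorm ` S" "d + \<epsilon> n"] \<open>S \<noteq> {}\<close> by (auto simp: d_def \<epsilon>_def)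
  then obtain X where XS: "\<And>n. X n \<in> S" and X: "\<And>n. hnorm (X n) < d + \<epsilon> n"
    by metis
  have \<epsilon>: "\<epsilon> \<longlonglongrightarrow> 0"
    unfolding \<epsilon>_def by (rule LIMSEQ_inverse_real_of_nat)
  define c where "c n = 2 * ((d + \<epsilon> n)\<^sup>2 - d\<^sup>2)" for n
  have "(hnorm (X k))\<^sup>2 \<le> (d + \<epsilon> k)\<^sup>2" for k
    using X[of k] by (intro power_mono) simp_all
  then have bound: "(hnorm (X m - X n))\<^sup>2 \<le> c m + c n" for m n
    using power2_hnorm_diff_le_midpoint[OF \<open>0 \<le> d\<close> d_le[OF midpoint[OF XS XS]], of m n]
    unfolding c_def by (smt (verit))
  have "c \<longlonglongrightarrow> 2 * ((d + 0)\<^sup>2 - d\<^sup>2)"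
    unfolding c_def by (intro tendsto_intros \<epsilon>)
  then have "c \<longlonglongrightarrow> 0"
    by simp
  then obtain L where L: "(\<lambda>n. hnorm (X n - L)) \<longlonglongrightarrow> 0"
    using hnorm_convergent_if_Cauchy_bound bound by blast
  have "hnorm L \<le> d"
  proof (rule LIMSEQ_le_const)
    show "(\<lambda>n. d + \<epsilon> n + hnorm (X n - L)) \<longlonglongrightarrow> d"
      using tendsto_add[OF tendsto_add[OF tendsto_const \<epsilon>] L] by simp
    show "\<exists>N. \<forall>n\<ge>N. hnorm L \<le> d + \<epsilon> n + hnorm (X n - L)"
    proof (intro exI allI impI)
      fix n
      have "hnorm L \<le> hnorm (X n) + hnorm (L - X n)"
        using hnorm_triangle[of "X n" "L - X n"] by simp
      then show "hnorm L \<le> d + \<epsilon> n + hnorm (X n - L)"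
        using X[of n] hnorm_minus_commute[of L "X n"] by linarith
    qed
  qed
  then show ?thesis
    using closed[OF XS L] d_le by force
qed

lemma cinner_eq_0_if_hnorm_minimal:
  assumes min: "\<And>t. hnorm L \<le> hnorm (L + scaleC t u)"
  shows "cinner L u = 0"
proof (rule ccontr)
  define p where "p = cinner L u"
  assume "cinner L u \<noteq> 0"
  then have p: "0 < (cmod p)\<^sup>2"
    by (simp add: p_def)
  (* stepping from L by t u with t = - s cnj p and 0 < s < 2 / (hnorm u)^2 would shorten L *)
  define s where "s = inverse ((hnorm u)\<^sup>2 + 1)"
  have s: "0 < s" "s * (hnorm u)\<^sup>2 < 1"
    by (simp_all add: s_def field_simps add_pos_nonneg)
  define t where "t = - (of_real s * cnj p)"
  have "t * p = - of_real (s * (cmod p)\<^sup>2)"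
    unfolding t_def of_real_mult complex_norm_square by (simp add: mult_ac)
  then have Re_tp: "Re (t * p) = - s * (cmod p)\<^sup>2"
    by simp
  have norm_t: "cmod t = s * cmod p"
    using \<open>0 < s\<close> by (simp add: t_def norm_mult)
  have "(hnorm L)\<^sup>2 \<le> (hnorm (L + scaleC t u))\<^sup>2"
    by (intro power_mono min) simp
  also have "\<dots> = (hnorm L)\<^sup>2 + (cmod t * hnorm u)\<^sup>2 + 2 * Re (t * p)"
    by (simp only: power2_hnorm_add hnorm_scaleC cinner_scaleC_right p_def)
  also have "\<dots> = (hnorm L)\<^sup>2 + s * (cmod p)\<^sup>2 * (s * (hnorm u)\<^sup>2 - 2)"
    unfolding Re_tp norm_t by (simp add: algebra_simps power2_eq_square)
  finally have "0 \<le> s * (cmod p)\<^sup>2 * (s * (hnorm u)\<^sup>2 - 2)"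
    by simp
  moreover have "s * (cmod p)\<^sup>2 * (s * (hnorm u)\<^sup>2 - 2) < 0"
    using s p by (intro mult_pos_neg) auto
  ultimately show False
    by linarith
qed

lemma tendsto_bounded_additive:
  fixes f :: "'a::chilbert \<Rightarrow> complex"
  assumes "Modules.additive f" and "\<And>x. cmod (f x) \<le> K * hnorm x"
    and "(\<lambda>n. hnorm (X n - L)) \<longlonglongrightarrow> 0"
  shows "(\<lambda>n. f (X n)) \<longlonglongrightarrow> f L"
proof -
  have "(\<lambda>n. f (X n - L)) \<longlonglongrightarrow> 0"
  proof (rule Lim_null_comparison)
    show "\<forall>\<^sub>F n in sequentially. norm (f (X n - L)) \<le> K * hnorm (X n - L)"
      using assms(2) by simp
    show "(\<lambda>n. K * hnorm (X n - L)) \<longlonglongrightarrow> 0"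
      using assms(3) by (rule tendsto_mult_right_zero)
  qed
  then show ?thesis
    by (simp add: additive.diff[OF assms(1)] LIM_zero_iff)
qed

(* The representing vector is a rescaled element of minimal norm in the hyperplane f = 1. *)
lemma riesz_representation:
  fixes f :: "'a::chilbert \<Rightarrow> complex"
  assumes add: "Modules.additive f" and hom: "\<And>c x. f (scaleC c x) = c * f x"
    and bounded: "\<And>x. cmod (f x) \<le> K * hnorm x"
  shows "\<exists>z. \<forall>x. f x = cinner z x"
proof (cases "\<forall>x. f x = 0")
  case False
  then obtain x1 where "f x1 \<noteq> 0"
    by blast
  define S where "S = {x. f x = 1}"
  have "scaleC (1 / f x1) x1 \<in> S"
    using \<open>f x1 \<noteq> 0\<close> by (simp add: S_def hom)
  moreover have "scaleC (1/2) (x + y) \<in> S" if "x \<in> S" "y \<in> S" for x y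
    using that by (simp add: S_def hom additive.add[OF add])
  moreover have "L \<in> S" if "\<And>n. X n \<in> S" "(\<lambda>n. hnorm (X n - L)) \<longlonglongrightarrow> 0" for X L
    using tendsto_bounded_additive[OF add bounded that(2)] that(1)
    by (simp add: S_def LIMSEQ_const_iff)
  ultimately obtain L where "f L = 1" and min: "\<And>x. f x = 1 \<Longrightarrow> hnorm L \<le> hnorm x"
    using hnorm_minimizer_exists[of S] unfolding S_def by blast
  have orth: "cinner L u = 0" if "f u = 0" for u
    using that \<open>f L = 1\<close>
    by (intro cinner_eq_0_if_hnorm_minimal min) (simp add: additive.add[OF add] hom)
  have "L \<noteq> 0"
    using \<open>f L = 1\<close> additive.zero[OF add] by auto
  have "cinner L x = f x * of_real ((hnorm L)\<^sup>2)" for x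
  proof -
    have "cinner L x = cinner L (x - scaleC (f x) L) + cinner L (scaleC (f x) L)"
      by (simp add: cinner_diff_right)
    also have "cinner L (x - scaleC (f x) L) = 0"
      using \<open>f L = 1\<close> by (intro orth) (simp add: additive.diff[OF add] hom)
    finally show ?thesis
      by (simp add: cinner_scaleC_right cinner_self_eq)
  qed
  then have "f x = cinner (scaleC (of_real (inverse ((hnorm L)\<^sup>2))) L) x" for x
    using \<open>L \<noteq> 0\<close> by (simp add: cinner_scaleC_left field_simps)
  then show ?thesis
    by blast
qed (auto intro: exI[of _ 0])

lemma adjoint_eqI:
  assumes "\<And>x y. cinner (T x) y = cinner x (S y)"
  shows "adjoint T = S"
  unfolding adjoint_def
proof (rule the_equality)
  fix S'
  assume S': "\<forall>x y. cinner (T x) y = cinner x (S' y)"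
  show "S' = S"
  proof
    fix y
    have "cinner (S' y - S y) (S' y - S y) = 0"
      using S' assms by (simp add: cinner_diff_right)
    then have "S' y - S y = 0"
      by (rule cinner_eq_zero)
    then show "S' y = S y"
      by simp
  qed
qed (use assms in blast)

lemma cinner_adjoint:
  assumes "T \<in> BH"
  shows "cinner (T x) y = cinner x (adjoint T y)"
proof -
  from assms obtain K where T_add: "Modules.additive T"
    and T_hom: "\<And>c x. T (scaleC c x) = scaleC c (T x)"
    and T_bounded: "\<And>x. hnorm (T x) \<le> K * hnorm x"
    unfolding BH_def Modules.additive_def by blast
  have "\<exists>z. \<forall>x. cinner y (T x) = cinner z x" for y
  proof (rule riesz_representation)
    show "Modules.additive (\<lambda>x. cinner y (T x))"
      by unfold_locales (simp add: additive.add[OF T_add] cinner_add_right)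
    show "cmod (cinner y (T x)) \<le> hnorm y * K * hnorm x" for x
      using norm_cinner_le_hnorm[of y "T x"] mult_left_mono[OF T_bounded[of x] hnorm_nonneg[of y]]
      by (simp add: mult.assoc)
  qed (simp add: T_hom cinner_scaleC_right)
  then obtain S where S: "\<And>y x. cinner y (T x) = cinner (S y) x"
    by metis
  have "adjoint T = S"
    by (rule adjoint_eqI) (metis S cinner_commute)
  then show ?thesis
    by (metis S cinner_commute)
qed

lemma selfadjoint_cinner:
  assumes "selfadjoint B"
  shows "cinner (B x) y = cinner x (B y)"
  using assms cinner_adjoint[of B] by (simp add: selfadjoint_def)

lemma scaleC_Re: "scaleC (of_real (Re a)) v = scaleC (1/2) (scaleC a v + scaleC (cnj a) v)"
  by (simp add: scaleC.scale_left_distrib[symmetric] complex_add_cnj)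

lemma ReOp_lincomb:
  assumes "selfadjoint B" and "selfadjoint C"
  shows "ReOp (op_add (op_scale a B) (op_scale b C))
    = op_add (op_scale (of_real (Re a)) B) (op_scale (of_real (Re b)) C)"
proof -
  have "adjoint (op_add (op_scale a B) (op_scale b C))
    = op_add (op_scale (cnj a) B) (op_scale (cnj b) C)"
    by (rule adjoint_eqI) (simp add: op_add_def op_scale_def cinner_add_left cinner_add_right
        cinner_scaleC_left cinner_scaleC_right selfadjoint_cinner[OF assms(1)]
        selfadjoint_cinner[OF assms(2)])
  then show ?thesis
    by (simp add: ReOp_def op_add_def op_scale_def scaleC_Re fun_eq_iff algebra_simps)
qed

lemma ReOp_selfadjoint:
  assumes "selfadjoint B"
  shows "ReOp B = B"
  using ReOp_lincomb[OF assms assms, of 1 0] by (simp add: op_add_def op_scale_def)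

lemma op_scale_BH:
  assumes "T \<in> BH"
  shows "op_scale c T \<in> BH"
proof -
  from assms obtain K where add: "\<And>x y. T (x + y) = T x + T y"
    and hom: "\<And>d x. T (scaleC d x) = scaleC d (T x)"
    and bounded: "\<And>x. hnorm (T x) \<le> K * hnorm x"
    unfolding BH_def by blast
  have "hnorm (scaleC c (T x)) \<le> (cmod c * K) * hnorm x" for x
    using mult_left_mono[OF bounded[of x] norm_ge_zero[of c]] by (simp add: hnorm_scaleC mult.assoc)
  then have "\<exists>K'. \<forall>x. hnorm (scaleC c (T x)) \<le> K' * hnorm x"
    by blast
  then show ?thesis
    unfolding BH_def op_scale_def by (auto simp: add hom scaleC.scale_right_distrib mult.commute)
qed

lemma norm_on_BH_lincomb_le:
  assumes "is_norm_on_BH N" and "B \<in> BH" and "C \<in> BH"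
  shows "N (op_add (op_scale a B) (op_scale b C)) \<le> cmod a * N B + cmod b * N C"
  using assms op_scale_BH[OF assms(2), of a] op_scale_BH[OF assms(3), of b]
  unfolding is_norm_on_BH_def by metis

lemma abs_mult_add_abs_mult_le:
  fixes a b x y :: real
  shows "\<bar>a\<bar> * x + \<bar>b\<bar> * y \<le> sqrt (a\<^sup>2 + b\<^sup>2) * sqrt (x\<^sup>2 + y\<^sup>2)"
  using norm_cauchy_schwarz[of "Complex \<bar>a\<bar> \<bar>b\<bar>" "Complex x y"]
  by (simp add: inner_complex_def complex_norm)

lemma norm_ReOp_lincomb_le:
  assumes N: "is_norm_on_BH N" and B: "selfadjoint B" and C: "selfadjoint C"
    and "cmod e \<le> 1" and l: "(cmod l1)\<^sup>2 + (cmod l2)\<^sup>2 \<le> 1"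
  shows "N (ReOp (op_scale e (op_add (op_scale l1 B) (op_scale l2 C))))
    \<le> sqrt ((N B)\<^sup>2 + (N C)\<^sup>2)"
proof -
  define a where "a = Re (e * l1)"
  define b where "b = Re (e * l2)"
  have "\<bar>a\<bar> \<le> cmod l1" "\<bar>b\<bar> \<le> cmod l2"
    using abs_Re_le_cmod[of "e * _"] mult_right_mono[OF \<open>cmod e \<le> 1\<close>, of "cmod _"]
    unfolding a_def b_def norm_mult by (metis mult_1 norm_ge_zero order_trans)+
  then have "a\<^sup>2 + b\<^sup>2 \<le> 1"
    using l abs_le_square_iff[of a "cmod l1"] abs_le_square_iff[of b "cmod l2"] by simp
  have "op_scale e (op_add (op_scale l1 B) (op_scale l2 C))
    = op_add (op_scale (e * l1) B) (op_scale (e * l2) C)"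
    by (simp add: op_add_def op_scale_def scaleC.scale_right_distrib fun_eq_iff)
  then have "N (ReOp (op_scale e (op_add (op_scale l1 B) (op_scale l2 C))))
    = N (op_add (op_scale (of_real a) B) (op_scale (of_real b) C))"
    by (simp add: ReOp_lincomb[OF B C] a_def b_def)
  also have "\<dots> \<le> \<bar>a\<bar> * N B + \<bar>b\<bar> * N C"
    using norm_on_BH_lincomb_le[OF N, of B C "of_real a" "of_real b"] B C
    by (simp add: selfadjoint_def)
  also have "\<dots> \<le> sqrt (a\<^sup>2 + b\<^sup>2) * sqrt ((N B)\<^sup>2 + (N C)\<^sup>2)"
    by (rule abs_mult_add_abs_mult_le)
  also have "\<dots> \<le> sqrt ((N B)\<^sup>2 + (N C)\<^sup>2)"
    using \<open>a\<^sup>2 + b\<^sup>2 \<le> 1\<close> by (simp add: mult_left_le_one_le)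
  finally show ?thesis .
qed

theorem corollary2p5:
  fixes N :: "('h::chilbert \<Rightarrow> 'h) \<Rightarrow> real" and B C :: "'h \<Rightarrow> 'h"
  assumes "is_norm_on_BH N"
    and "selfadjoint B" and "selfadjoint C"
  shows "max (N B) (N C) \<le> w_Ne N B C \<and> w_Ne N B C \<le> sqrt ((N B)\<^sup>2 + (N C)\<^sup>2)"
proof -
  define W where "W = {N (ReOp (op_scale (exp (\<i> * complex_of_real \<theta>))
                         (op_add (op_scale l1 B) (op_scale l2 C))))
                     | l1 l2 \<theta>. (cmod l1)\<^sup>2 + (cmod l2)\<^sup>2 \<le> 1}"
  have upper: "w \<le> sqrt ((N B)\<^sup>2 + (N C)\<^sup>2)" if "w \<in> W" for w
    using that norm_ReOp_lincomb_le[OF assms] unfolding W_def by auto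
  have member:
    "N (ReOp (op_scale (exp (\<i> * of_real \<theta>)) (op_add (op_scale l1 B) (op_scale l2 C)))) \<in> W"
    if "(cmod l1)\<^sup>2 + (cmod l2)\<^sup>2 \<le> 1" for l1 l2 \<theta>
    using that unfolding W_def by blast
  have "N B \<in> W" and "N C \<in> W"
    using member[of 1 0 0] member[of 0 1 0]
    by (simp_all add: op_add_def op_scale_def ReOp_selfadjoint assms(2,3))
  moreover have "bdd_above W"
    using upper by (rule bdd_aboveI)
  ultimately show ?thesis
    using upper unfolding w_Ne_def W_def[symmetric] by (auto intro: cSup_upper cSup_least)
qed

end
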